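(* Let $g$ solve system (S3) with initial data $h_{ii}>0$, $h_{11}\le h_{22}\le h_{33}$, and suppose $h\in D_S$, i.e. the solution of the planar system (P) starting at $(b_0,c_0)=(h_{00}^{1/3}h_{22},h_{00}^{1/3}h_{33})$ converges to $P_1$. Then the solution exists for all $t\ge 0$ and as $t\to\infty$: $g_{00}\to0$; $g_{11},g_{22},g_{33}\to\infty$; $g_{22}/g_{11}\to4$ and $g_{22}/g_{33}\to1$.
   Context: Let $\det h = h_{00}h_{11}h_{22}h_{33}$, $\beta=\frac{1}{6(\det h)^2}$, $p(x,y,z) = x^4 - x^3(y+z) + x^2yz + x(-y^3+y^2z+yz^2-z^3) + y^4 - y^3z - yz^3 + z^4$, $q(x,y,z) = 5x^4 - 3x^3(y+z) + x^2yz + x(y^3-y^2z-yz^2+z^3) - 3y^4 + 3y^3z + 3yz^3 - 3z^4$, $r(x,y,z) = \tfrac12(p+3q)(x,y,z) = 8x^4-5x^3(y+z)+2x^2yz+x(y^3-y^2z-yz^2+z^3)-4y^4+4y^3z+4yz^3-4z^4$. System (S3): $\dot g_{00} = -\beta\,p(g_{11},g_{22},g_{33})\,g_{00}^3$, $\dot g_{11} = -\beta\,q(g_{11},g_{22},g_{33})\,g_{00}^2g_{11}$, $\dot g_{22} = -\beta\,q(g_{22},g_{33},g_{11})\,g_{00}^2g_{22}$, $\dot g_{33} = -\beta\,q(g_{33},g_{11},g_{22})\,g_{00}^2g_{33}$, $g_{ii}(0)=h_{ii}$ (Bach flow on $\mathbb{R}\times\mathbb{S}^3$ in a diagonalizing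 frame; $g_{00}g_{11}g_{22}g_{33}=\det h$ is preserved). Set $a=g_{00}^{1/3}g_{11}$, $b=g_{00}^{1/3}g_{22}$, $c=g_{00}^{1/3}g_{33}$, so $abc=\det h$. Under (S3), $(b,c)$ follows, up to a time reparametrization, the planar system (P): $\dot b=-\tfrac23 r(b,a,c)\,b$, $\dot c=-\tfrac23 r(c,a,b)\,c$ with $a=\det h/(bc)$, on the region $a\le b\le c$. $P_0$ is the point $b=c=(\det h)^{1/3}$ (where $a=b=c$), and $P_1$ is the point $b=c=(4\det h)^{1/3}$ (where $4a=b=c$). $D_S$ is the set of initial metrics whose (P)-trajectory converges to $P_1$ (the stable manifold of the saddle $P_1$); $D_\infty$ the set whose (P)-trajectory has $b,c\to\infty$; $D_{L_0}$ the set whose (P)-trajectory converges to $P_0$. *)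

theory Defs
  imports "HOL-Analysis.Analysis"
begin

definition bach_p :: "real \<Rightarrow> real \<Rightarrow> real \<Rightarrow> real" where
  "bach_p x y z = x^4 - x^3*(y+z) + x^2*y*z + x*(- (y^3) + y^2*z + y*z^2 - z^3)
                  + y^4 - y^3*z - y*z^3 + z^4"

definition bach_q :: "real \<Rightarrow> real \<Rightarrow> real \<Rightarrow> real" where
  "bach_q x y z = 5*x^4 - 3*x^3*(y+z) + x^2*y*z + x*(y^3 - y^2*z - y*z^2 + z^3)
                  - 3*y^4 + 3*y^3*z + 3*y*z^3 - 3*z^4"

definition bach_r :: "real \<Rightarrow> real \<Rightarrow> real \<Rightarrow> real" where
  "bach_r x y z = (bach_p x y z + 3 * bach_q x y z) / 2"

definition S3_solution ::
  "real \<Rightarrow> real \<Rightarrow> real \<Rightarrow> real \<Rightarrow>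
   (real \<Rightarrow> real) \<Rightarrow> (real \<Rightarrow> real) \<Rightarrow> (real \<Rightarrow> real) \<Rightarrow> (real \<Rightarrow> real) \<Rightarrow> bool" where
  "S3_solution h0 h1 h2 h3 g0 g1 g2 g3 \<longleftrightarrow>
     (let \<beta> = 1 / (6 * (h0*h1*h2*h3)^2) in
      g0 0 = h0 \<and> g1 0 = h1 \<and> g2 0 = h2 \<and> g3 0 = h3 \<and>
      (\<forall>t\<ge>0.
        (g0 has_real_derivative (- \<beta> * bach_p (g1 t) (g2 t) (g3 t) * (g0 t)^3)) (at t within {0..}) \<and>
        (g1 has_real_derivative (- \<beta> * bach_q (g1 t) (g2 t) (g3 t) * (g0 t)^2 * g1 t)) (at t within {0..}) \<and>
        (g2 has_real_derivative (- \<beta> * bach_q (g2 t) (g3 t) (g1 t) * (g0 t)^2 * g2 t)) (at t within {0..}) \<and>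
        (g3 has_real_derivative (- \<beta> * bach_q (g3 t) (g1 t) (g2 t) * (g0 t)^2 * g3 t)) (at t within {0..})))"

definition P_solution ::
  "real \<Rightarrow> real \<Rightarrow> real \<Rightarrow> (real \<Rightarrow> real) \<Rightarrow> (real \<Rightarrow> real) \<Rightarrow> bool" where
  "P_solution dh b0 c0 b c \<longleftrightarrow>
     b 0 = b0 \<and> c 0 = c0 \<and>
     (\<forall>t\<ge>0. b t > 0 \<and> c t > 0 \<and>
        (b has_real_derivative (- (2/3) * bach_r (b t) (dh / (b t * c t)) (c t) * b t)) (at t within {0..}) \<and>
        (c has_real_derivative (- (2/3) * bach_r (c t) (dh / (b t * c t)) (b t) * c t)) (at t within {0..}))"

definition in_D_S :: "real \<Rightarrow> real \<Rightarrow> real \<Rightarrow> real \<Rightarrow> bool" where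
  "in_D_S h0 h1 h2 h3 \<longleftrightarrow>
     (let dh = h0*h1*h2*h3 in
      \<exists>b c. P_solution dh (h0 powr (1/3) * h2) (h0 powr (1/3) * h3) b c \<and>
            (b \<longlongrightarrow> (4*dh) powr (1/3)) at_top \<and> (c \<longlongrightarrow> (4*dh) powr (1/3)) at_top)"

end

theory Submission
  imports Defs
begin

text \<open>Along the (P)-trajectory (b, c) with a = det h/(b c), let U > 0 solve U' = -(p(a,b,c)/3) U in
  the time s of (P) and pass to the time t with dt/ds = 1/(\<beta> U^2). This inverts the reduction of (S3)
  to (P): the curve (U^3, a/U, b/U, c/U) solves (S3) with the initial data h. Since (a,b,c) tends to
  (L/4, L, L), L = (4 det h)^(1/3), the rate p(a,b,c) tends to 9 (L/4)^4 > 0, so U \<rightarrow> 0 and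
  t \<rightarrow> \<infinity> as s \<rightarrow> \<infinity>; hence g00 = U^3 \<rightarrow> 0, each gii \<rightarrow> \<infinity>, g22/g11 = b/a \<rightarrow> 4 and g22/g33 = b/c \<rightarrow> 1.
  The right-hand side of (S3) is polynomial, hence Lipschitz on bounded sets, so by Gr\<ouml>nwall's
  argument every solution of (S3) is this one.\<close>

section \<open>Lipschitz continuity on bounded sets and uniqueness for ODEs\<close>

definition lipschitz_on_bounded :: "('a::metric_space \<Rightarrow> 'b::metric_space) \<Rightarrow> bool" where
  "lipschitz_on_bounded f \<longleftrightarrow> (\<forall>B. bounded B \<longrightarrow> (\<exists>L. L-lipschitz_on B f))"

lemma lipschitz_on_boundedD:
  assumes "lipschitz_on_bounded f" "bounded B"
  obtains L where "L-lipschitz_on B f"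
  using assms unfolding lipschitz_on_bounded_def by blast

lemma lipschitz_on_imp_bounded_image:
  assumes "L-lipschitz_on B f" "bounded B"
  shows "bounded (f ` B)"
proof (cases "B = {}")
  case False
  then obtain x0 where x0: "x0 \<in> B" by blast
  obtain R where R: "\<And>x. x \<in> B \<Longrightarrow> dist x0 x \<le> R"
    using \<open>bounded B\<close> bounded_any_center by (metis bounded_def)
  have "dist (f x0) (f x) \<le> L * R" if "x \<in> B" for x
    using lipschitz_onD[OF assms(1) x0 that] R[OF that] lipschitz_on_nonneg[OF assms(1)]
    by (meson mult_left_mono order_trans)
  then show ?thesis unfolding bounded_def by blast
qed simp

lemma lipschitz_on_bounded_const: "lipschitz_on_bounded (\<lambda>x. c)"
  unfolding lipschitz_on_bounded_def by (blast intro: lipschitz_on_constant)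

lemma lipschitz_on_bounded_bounded_linear:
  "bounded_linear f \<Longrightarrow> lipschitz_on_bounded f"
  unfolding lipschitz_on_bounded_def by (metis bounded_linear.lipschitz_boundE)

lemma lipschitz_on_bounded_add:
  fixes f g :: "'a::metric_space \<Rightarrow> 'b::real_normed_vector"
  assumes "lipschitz_on_bounded f" "lipschitz_on_bounded g"
  shows "lipschitz_on_bounded (\<lambda>x. f x + g x)"
  using assms unfolding lipschitz_on_bounded_def by (blast intro: lipschitz_on_add)

lemma lipschitz_on_bounded_diff:
  fixes f g :: "'a::metric_space \<Rightarrow> 'b::real_normed_vector"
  assumes "lipschitz_on_bounded f" "lipschitz_on_bounded g"
  shows "lipschitz_on_bounded (\<lambda>x. f x - g x)"
  using assms unfolding lipschitz_on_bounded_def by (blast intro: lipschitz_on_diff)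

lemma lipschitz_on_bounded_mult:
  fixes f g :: "'a::metric_space \<Rightarrow> 'b::real_normed_algebra"
  assumes f: "lipschitz_on_bounded f" and g: "lipschitz_on_bounded g"
  shows "lipschitz_on_bounded (\<lambda>x. f x * g x)"
  unfolding lipschitz_on_bounded_def
proof (intro allI impI)
  fix B :: "'a set" assume B: "bounded B"
  obtain Lf Lg where Lf: "Lf-lipschitz_on B f" and Lg: "Lg-lipschitz_on B g"
    using f g B by (meson lipschitz_on_boundedD)
  obtain Mf Mg where Mf: "Mf > 0" "\<And>x. x \<in> B \<Longrightarrow> norm (f x) \<le> Mf"
    and Mg: "Mg > 0" "\<And>x. x \<in> B \<Longrightarrow> norm (g x) \<le> Mg"
    using lipschitz_on_imp_bounded_image[OF Lf B] lipschitz_on_imp_bounded_image[OF Lg B]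
    unfolding bounded_pos by (meson imageI)
  have "(Mf * Lg + Mg * Lf)-lipschitz_on B (\<lambda>x. f x * g x)"
  proof (rule lipschitz_onI)
    fix x y assume xy: "x \<in> B" "y \<in> B"
    have "f x * g x - f y * g y = f x * (g x - g y) + (f x - f y) * g y"
      by (simp add: algebra_simps)
    then have "norm (f x * g x - f y * g y) \<le> norm (f x) * norm (g x - g y) + norm (f x - f y) * norm (g y)"
      by (metis norm_mult_ineq norm_triangle_le add_mono)
    also have "\<dots> \<le> Mf * (Lg * dist x y) + (Lf * dist x y) * Mg"
      using Mf Mg xy lipschitz_onD[OF Lf xy] lipschitz_onD[OF Lg xy] lipschitz_on_nonneg[OF Lf]
      by (intro add_mono mult_mono) (auto simp: dist_norm)
    finally show "dist (f x * g x) (f y * g y) \<le> (Mf * Lg + Mg * Lf) * dist x y"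
      by (simp add: dist_norm algebra_simps)
  next
    show "0 \<le> Mf * Lg + Mg * Lf"
      using Mf Mg lipschitz_on_nonneg[OF Lf] lipschitz_on_nonneg[OF Lg] by simp
  qed
  then show "\<exists>L. L-lipschitz_on B (\<lambda>x. f x * g x)" ..
qed

lemma lipschitz_on_bounded_power:
  fixes f :: "'a::metric_space \<Rightarrow> 'b::real_normed_algebra_1"
  assumes "lipschitz_on_bounded f"
  shows "lipschitz_on_bounded (\<lambda>x. f x ^ n)"
  by (induction n) (simp_all add: lipschitz_on_bounded_const lipschitz_on_bounded_mult assms)

lemma lipschitz_on_bounded_Pair:
  assumes "lipschitz_on_bounded f" "lipschitz_on_bounded g"
  shows "lipschitz_on_bounded (\<lambda>x. (f x, g x))"
  using assms unfolding lipschitz_on_bounded_def by (blast intro: lipschitz_on_Pair)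

lemma lipschitz_on_bounded_minus:
  fixes f :: "'a::metric_space \<Rightarrow> 'b::real_normed_vector"
  shows "lipschitz_on_bounded f \<Longrightarrow> lipschitz_on_bounded (\<lambda>x. - f x)"
  unfolding lipschitz_on_bounded_def by (blast intro: lipschitz_on_minus)

lemmas lipschitz_on_bounded_intros =
  lipschitz_on_bounded_const lipschitz_on_bounded_add lipschitz_on_bounded_diff
  lipschitz_on_bounded_minus lipschitz_on_bounded_mult lipschitz_on_bounded_power

text \<open>Gr\<ouml>nwall's argument: the squared distance D of two solutions satisfies D' \<le> 2 L D,
  so D(s) e^{-2 L s} is non-increasing and vanishes at s = 0.\<close>
lemma ode_solutions_unique:
  fixes F :: "'a::real_inner \<Rightarrow> 'a"
  assumes F: "lipschitz_on_bounded F"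
    and X: "\<And>s. s \<ge> 0 \<Longrightarrow> (X has_vector_derivative F (X s)) (at s within {0..})"
    and Y: "\<And>s. s \<ge> 0 \<Longrightarrow> (Y has_vector_derivative F (Y s)) (at s within {0..})"
    and init: "X 0 = Y 0" and t: "t \<ge> 0"
  shows "X t = Y t"
proof -
  have "continuous_on {0..t} X" "continuous_on {0..t} Y"
    using continuous_on_vector_derivative[of "{0..}", OF X] continuous_on_vector_derivative[of "{0..}", OF Y]
    by (auto elim: continuous_on_subset)
  then have "bounded (X ` {0..t} \<union> Y ` {0..t})"
    by (meson bounded_Un compact_Icc compact_continuous_image compact_imp_bounded)
  then obtain L where L: "L-lipschitz_on (X ` {0..t} \<union> Y ` {0..t}) F"
    by (rule lipschitz_on_boundedD[OF F])
  define D where "D s = inner (X s - Y s) (X s - Y s)" for s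
  define D' where "D' s = 2 * inner (X s - Y s) (F (X s) - F (Y s))" for s
  have dD: "(D has_real_derivative D' s) (at s within {0..})" if "s \<ge> 0" for s
  proof -
    have "((\<lambda>s. X s - Y s) has_vector_derivative F (X s) - F (Y s)) (at s within {0..})"
      using X[OF that] Y[OF that] by (rule has_vector_derivative_diff)
    from bounded_bilinear.has_vector_derivative[OF bounded_bilinear_inner this this] show ?thesis
      unfolding D_def D'_def has_real_derivative_iff_has_vector_derivative
      by (simp add: inner_commute)
  qed
  have D'_le: "D' s \<le> 2 * L * D s" if "s \<in> {0..t}" for s
  proof -
    have "inner (X s - Y s) (F (X s) - F (Y s)) \<le> norm (X s - Y s) * norm (F (X s) - F (Y s))"
      by (rule norm_cauchy_schwarz)
    also have "\<dots> \<le> norm (X s - Y s) * (L * norm (X s - Y s))"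
      using lipschitz_on_normD[OF L] that by (intro mult_left_mono) auto
    finally show ?thesis unfolding D_def D'_def by (simp add: dot_square_norm power2_eq_square algebra_simps)
  qed
  define \<phi> where "\<phi> s = D s * exp (- 2 * L * s)" for s
  have "\<phi> t \<le> \<phi> 0"
  proof (rule DERIV_nonpos_imp_decreasing_open[OF t])
    have "continuous_on {0..} D"
      using dD by (intro DERIV_continuous_on) auto
    then show "continuous_on {0..t} \<phi>"
      unfolding \<phi>_def by (auto intro!: continuous_intros elim: continuous_on_subset)
  next
    fix s assume s: "0 < s" "s < t"
    have "(D has_real_derivative D' s) (at s)"
      using dD[of s] s at_within_interior[of s "{0..}"] by simp
    then have "(\<phi> has_real_derivative (D' s - 2 * L * D s) * exp (- 2 * L * s)) (at s)"
      unfolding \<phi>_def by (auto intro!: derivative_eq_intros simp: algebra_simps)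
    moreover have "(D' s - 2 * L * D s) * exp (- 2 * L * s) \<le> 0"
      using D'_le[of s] s by (intro mult_nonpos_nonneg) auto
    ultimately show "\<exists>y. (\<phi> has_real_derivative y) (at s) \<and> y \<le> 0" by blast
  qed
  then have "D t \<le> 0" unfolding \<phi>_def D_def using init by (simp add: mult_le_0_iff)
  then show ?thesis unfolding D_def by (metis inner_ge_zero inner_eq_zero_iff order.antisym right_minus_eq)
qed

section \<open>Antiderivatives and changes of time\<close>

lemma DERIV_interval_integral:
  fixes f :: "real \<Rightarrow> real"
  assumes "continuous_on UNIV f"
  shows "((\<lambda>u. LBINT y=0..u. f y) has_real_derivative f x) (at x)"
proof -
  have "((\<lambda>u. LBINT y=0..u. f y) has_vector_derivative f x) (at x within {min 0 (x - 1)..max 0 (x + 1)})"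
    using interval_integral_FTC2[of "min 0 (x - 1)" 0 "max 0 (x + 1)" f x]
      continuous_on_subset[OF assms, of "{min 0 (x - 1)..max 0 (x + 1)}"]
    by (simp add: zero_ereal_def)
  moreover have "at x within {min 0 (x - 1)..max 0 (x + 1)} = at x"
    by (intro at_within_interior) auto
  ultimately show ?thesis by (simp add: has_real_derivative_iff_has_vector_derivative)
qed

lemma DERIV_eventually_ge_imp_filterlim_at_top:
  fixes f f' :: "real \<Rightarrow> real"
  assumes f': "\<And>s. (f has_real_derivative f' s) (at s)"
    and ge: "\<forall>\<^sub>F s in at_top. c \<le> f' s" and c: "0 < c"
  shows "filterlim f at_top at_top"
proof -
  obtain s0 where s0: "\<And>s. s \<ge> s0 \<Longrightarrow> c \<le> f' s"
    using ge unfolding eventually_at_top_linorder by blast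
  have linear_bound: "f s0 + c * (s - s0) \<le> f s" if "s \<ge> s0" for s
  proof -
    have "f s0 - c * s0 \<le> f s - c * s"
    proof (rule DERIV_nonneg_imp_nondecreasing[OF that])
      fix x assume "s0 \<le> x"
      then show "\<exists>y. ((\<lambda>x. f x - c * x) has_real_derivative y) (at x) \<and> 0 \<le> y"
        using s0 f' by (intro exI[of _ "f' x - c"] conjI derivative_eq_intros refl) auto
    qed
    then show ?thesis by (simp add: algebra_simps)
  qed
  have "filterlim (\<lambda>s. c * s) at_top at_top"
    by (rule filterlim_tendsto_pos_mult_at_top[OF tendsto_const c filterlim_ident])
  then have "filterlim (\<lambda>s. (f s0 - c * s0) + c * s) at_top at_top"
    by (rule filterlim_tendsto_add_at_top[OF tendsto_const])
  moreover have "\<forall>\<^sub>F s in at_top. (f s0 - c * s0) + c * s \<le> f s"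
    using eventually_ge_at_top[of s0] by eventually_elim (use linear_bound in \<open>auto simp: algebra_simps\<close>)
  ultimately show ?thesis by (rule filterlim_at_top_mono)
qed

context
  fixes T k :: "real \<Rightarrow> real"
  assumes T_deriv: "\<And>s. (T has_real_derivative k s) (at s)"
    and k_pos: "\<And>s. k s > 0"
    and T_0: "T 0 = 0"
    and T_at_top: "filterlim T at_top at_top"
begin

lemma strict_mono_clock: "strict_mono T"
proof (rule strict_monoI)
  fix x y :: real assume "x < y"
  then show "T x < T y"
    by (rule DERIV_pos_imp_increasing) (use T_deriv k_pos in blast)
qed

lemma clock_inv_eq:
  assumes "T (-1) \<le> y"
  shows "T (inv T y) = y"
proof -
  obtain s where s: "y \<le> T s" "-1 \<le> s"
    using T_at_top unfolding filterlim_at_top eventually_at_top_linorder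
    by (metis linorder_le_cases order.refl)
  have "\<exists>x\<ge>-1. x \<le> s \<and> T x = y"
    using s assms by (intro IVT) (auto intro: DERIV_isCont T_deriv)
  then have "y \<in> range T" by auto
  then show ?thesis by (rule f_inv_into_f)
qed

lemma clock_neg: "T (-1) < 0"
  using strict_mono_clock T_0 by (metis neg_less_0_iff_less strict_mono_less zero_less_one)

lemma inv_clock_nonneg:
  assumes "t \<ge> 0"
  shows "inv T t \<ge> 0"
proof -
  have "T 0 \<le> T (inv T t)" using clock_inv_eq clock_neg assms T_0 by simp
  then show ?thesis using strict_mono_less_eq[OF strict_mono_clock] by blast
qed

lemma inv_clock_0: "inv T 0 = 0"
  using inv_f_f[OF strict_mono_imp_inj_on[OF strict_mono_clock]] T_0 by metis

lemma inv_clock_at_top: "filterlim (inv T) at_top at_top"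
  unfolding filterlim_at_top eventually_at_top_linorder
proof (intro allI exI impI)
  fix Z t assume "max 0 (T Z) \<le> t"
  then have "T Z \<le> T (inv T t)" using clock_inv_eq clock_neg by simp
  then show "Z \<le> inv T t" using strict_mono_less_eq[OF strict_mono_clock] by blast
qed

lemma inv_clock_deriv:
  assumes "t \<ge> 0"
  shows "(inv T has_real_derivative inverse (k (inv T t))) (at t)"
proof (rule DERIV_inverse_function)
  show "(T has_real_derivative k (inv T t)) (at (inv T t))" by (rule T_deriv)
  show "k (inv T t) \<noteq> 0" using k_pos by (metis less_irrefl)
  show "T (-1) < t" "t < t + 1" using clock_neg assms by auto
  show "T (inv T y) = y" if "T (-1) < y" for y using clock_inv_eq that by simp
  have "isCont (inv T) (T (inv T t))"
    by (rule isCont_inverse_function[of 1])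
      (auto intro: DERIV_isCont T_deriv inv_f_f strict_mono_imp_inj_on strict_mono_clock)
  then show "isCont (inv T) t" using clock_inv_eq clock_neg assms by simp
qed

end

section \<open>The Bach polynomials and the vector field of (S3)\<close>

lemma bach_p_homogeneous: "u \<noteq> 0 \<Longrightarrow> bach_p x y z = u^4 * bach_p (x/u) (y/u) (z/u)"
proof -
  have "bach_p (u * x') (u * y') (u * z') = u^4 * bach_p x' y' z'" for x' y' z'
    unfolding bach_p_def by (simp add: algebra_simps power2_eq_square power3_eq_cube power4_eq_xxxx)
  from this[of "x/u" "y/u" "z/u"] show "u \<noteq> 0 \<Longrightarrow> ?thesis" by simp
qed

lemma bach_q_homogeneous: "u \<noteq> 0 \<Longrightarrow> bach_q x y z = u^4 * bach_q (x/u) (y/u) (z/u)"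
proof -
  have "bach_q (u * x') (u * y') (u * z') = u^4 * bach_q x' y' z'" for x' y' z'
    unfolding bach_q_def by (simp add: algebra_simps power2_eq_square power3_eq_cube power4_eq_xxxx)
  from this[of "x/u" "y/u" "z/u"] show "u \<noteq> 0 \<Longrightarrow> ?thesis" by simp
qed

lemma bach_p_diagonal: "bach_p x (4*x) (4*x) = 9 * x^4"
  unfolding bach_p_def by (simp add: algebra_simps power2_eq_square power3_eq_cube power4_eq_xxxx)

lemma bach_rate_a: "2/3 * (bach_r b a c + bach_r c a b) + bach_p a b c / 3 = - bach_q a b c"
  unfolding bach_p_def bach_q_def bach_r_def
  by (simp add: field_simps power2_eq_square power3_eq_cube power4_eq_xxxx)

lemma bach_rate_b: "- (2/3) * bach_r b a c + bach_p a b c / 3 = - bach_q b c a"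
  unfolding bach_p_def bach_q_def bach_r_def
  by (simp add: field_simps power2_eq_square power3_eq_cube power4_eq_xxxx)

lemma bach_rate_c: "- (2/3) * bach_r c a b + bach_p a b c / 3 = - bach_q c a b"
  unfolding bach_p_def bach_q_def bach_r_def
  by (simp add: field_simps power2_eq_square power3_eq_cube power4_eq_xxxx)

lemma lipschitz_on_bounded_bach_p:
  "lipschitz_on_bounded f \<Longrightarrow> lipschitz_on_bounded g \<Longrightarrow> lipschitz_on_bounded h \<Longrightarrow>
    lipschitz_on_bounded (\<lambda>x. bach_p (f x) (g x) (h x))"
  unfolding bach_p_def by (intro lipschitz_on_bounded_intros)

lemma lipschitz_on_bounded_bach_q:
  "lipschitz_on_bounded f \<Longrightarrow> lipschitz_on_bounded g \<Longrightarrow> lipschitz_on_bounded h \<Longrightarrow>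
    lipschitz_on_bounded (\<lambda>x. bach_q (f x) (g x) (h x))"
  unfolding bach_q_def by (intro lipschitz_on_bounded_intros)

definition bach_field :: "real \<Rightarrow> real \<times> real \<times> real \<times> real \<Rightarrow> real \<times> real \<times> real \<times> real" where
  "bach_field \<beta> = (\<lambda>(x0, x1, x2, x3).
     (- \<beta> * bach_p x1 x2 x3 * x0^3, - \<beta> * bach_q x1 x2 x3 * x0^2 * x1,
      - \<beta> * bach_q x2 x3 x1 * x0^2 * x2, - \<beta> * bach_q x3 x1 x2 * x0^2 * x3))"

lemma lipschitz_on_bounded_bach_field: "lipschitz_on_bounded (bach_field \<beta>)"
proof -
  have coords: "lipschitz_on_bounded (\<lambda>x::real \<times> real \<times> real \<times> real. fst x)"
    "lipschitz_on_bounded (\<lambda>x::real \<times> real \<times> real \<times> real. fst (snd x))"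
    "lipschitz_on_bounded (\<lambda>x::real \<times> real \<times> real \<times> real. fst (snd (snd x)))"
    "lipschitz_on_bounded (\<lambda>x::real \<times> real \<times> real \<times> real. snd (snd (snd x)))"
    by (intro lipschitz_on_bounded_bounded_linear bounded_linear_intros)+
  show ?thesis
    unfolding bach_field_def split_beta
    by (rule lipschitz_on_bounded_Pair lipschitz_on_bounded_mult lipschitz_on_bounded_const
        lipschitz_on_bounded_power lipschitz_on_bounded_bach_p lipschitz_on_bounded_bach_q coords)+
qed

lemma S3_solution_imp_ode:
  assumes "S3_solution h0 h1 h2 h3 g0 g1 g2 g3" "t \<ge> 0"
  shows "((\<lambda>t. (g0 t, g1 t, g2 t, g3 t)) has_vector_derivative
           bach_field (1 / (6 * (h0*h1*h2*h3)^2)) (g0 t, g1 t, g2 t, g3 t)) (at t within {0..})"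
  using assms
  unfolding S3_solution_def Let_def bach_field_def prod.case has_real_derivative_iff_has_vector_derivative
  by (elim conjE allE[of _ t]) (intro has_vector_derivative_Pair; simp)

lemma S3_solution_unique:
  assumes g: "S3_solution h0 h1 h2 h3 g0 g1 g2 g3" and k: "S3_solution h0 h1 h2 h3 k0 k1 k2 k3"
    and t: "t \<ge> 0"
  shows "g0 t = k0 t \<and> g1 t = k1 t \<and> g2 t = k2 t \<and> g3 t = k3 t"
proof -
  have "(g0 0, g1 0, g2 0, g3 0) = (k0 0, k1 0, k2 0, k3 0)"
    using g k unfolding S3_solution_def Let_def by simp
  then have "(g0 t, g1 t, g2 t, g3 t) = (k0 t, k1 t, k2 t, k3 t)"
    using ode_solutions_unique[where X = "\<lambda>t. (g0 t, g1 t, g2 t, g3 t)" and Y = "\<lambda>t. (k0 t, k1 t, k2 t, k3 t)",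
        OF lipschitz_on_bounded_bach_field S3_solution_imp_ode[OF g] S3_solution_imp_ode[OF k] _ t]
    by simp
  then show ?thesis by simp
qed

section \<open>A solution of (S3) built from a (P)-trajectory converging to P1\<close>

lemma cube_powr_third: "x > 0 \<Longrightarrow> (x powr (1/3)) ^ 3 = (x::real)"
  by (simp add: powr_realpow[symmetric] powr_powr)

lemma continuous_on_max_0:
  fixes f :: "real \<Rightarrow> 'a::topological_space"
  assumes "continuous_on {0..} f"
  shows "continuous_on UNIV (\<lambda>s. f (max s 0))"
proof -
  have "continuous_on UNIV (\<lambda>s::real. max s 0)" by (intro continuous_intros)
  then show ?thesis
    using continuous_on_compose2[OF assms] by fastforce
qed

locale D_S_trajectory =
  fixes h0 h1 h2 h3 :: real and b c :: "real \<Rightarrow> real"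
  assumes h_pos: "h0 > 0" "h1 > 0" "h2 > 0" "h3 > 0"
    and P_sol: "P_solution (h0*h1*h2*h3) (h0 powr (1/3) * h2) (h0 powr (1/3) * h3) b c"
    and b_tendsto: "(b \<longlongrightarrow> (4*(h0*h1*h2*h3)) powr (1/3)) at_top"
    and c_tendsto: "(c \<longlongrightarrow> (4*(h0*h1*h2*h3)) powr (1/3)) at_top"
begin

definition "det_h = h0*h1*h2*h3"
definition "\<beta> = 1 / (6 * det_h^2)"
definition "L = (4 * det_h) powr (1/3)"
definition "a s = det_h / (b s * c s)"

lemma det_h_pos: "det_h > 0" and \<beta>_pos: "\<beta> > 0" and L_pos: "L > 0"
  using h_pos unfolding det_h_def \<beta>_def L_def by simp_all

lemma L_cube: "L^3 = 4 * det_h"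
  unfolding L_def using det_h_pos by (simp add: cube_powr_third)

lemma b_pos: "s \<ge> 0 \<Longrightarrow> b s > 0" and c_pos: "s \<ge> 0 \<Longrightarrow> c s > 0"
  using P_sol unfolding P_solution_def by auto

lemma b_deriv: "s \<ge> 0 \<Longrightarrow> (b has_real_derivative (- (2/3) * bach_r (b s) (a s) (c s)) * b s) (at s within {0..})"
  and c_deriv: "s \<ge> 0 \<Longrightarrow> (c has_real_derivative (- (2/3) * bach_r (c s) (a s) (b s)) * c s) (at s within {0..})"
  using P_sol unfolding P_solution_def a_def det_h_def by auto

lemma a_deriv:
  assumes s: "s \<ge> 0"
  shows "(a has_real_derivative ((2/3) * (bach_r (b s) (a s) (c s) + bach_r (c s) (a s) (b s))) * a s) (at s within {0..})"
proof -
  let ?b' = "(- (2/3) * bach_r (b s) (a s) (c s)) * b s" and ?c' = "(- (2/3) * bach_r (c s) (a s) (b s)) * c s"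
  have "((\<lambda>s. det_h / (b s * c s)) has_real_derivative - (det_h * (?b' * c s + b s * ?c')) / (b s * c s)^2)
      (at s within {0..})"
    using b_pos[OF s] c_pos[OF s]
    by (auto intro!: derivative_eq_intros b_deriv[OF s] c_deriv[OF s] simp: power2_eq_square)
  moreover have "- (det_h * (?b' * c s + b s * ?c')) / (b s * c s)^2
      = ((2/3) * (bach_r (b s) (a s) (c s) + bach_r (c s) (a s) (b s))) * a s"
    using b_pos[OF s] c_pos[OF s] unfolding a_def by (simp add: field_simps power2_eq_square)
  ultimately show ?thesis unfolding a_def[abs_def] by simp
qed

lemma b_tendsto_L: "(b \<longlongrightarrow> L) at_top" and c_tendsto_L: "(c \<longlongrightarrow> L) at_top"
  using b_tendsto c_tendsto unfolding L_def det_h_def by simp_all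

lemma a_tendsto: "(a \<longlongrightarrow> L/4) at_top"
proof -
  have "(a \<longlongrightarrow> det_h / (L * L)) at_top"
    unfolding a_def[abs_def] using b_tendsto_L c_tendsto_L L_pos by (auto intro!: tendsto_intros)
  moreover have "det_h / (L * L) = L/4"
    using L_cube L_pos by (simp add: field_simps power3_eq_cube)
  ultimately show ?thesis by simp
qed

text \<open>The rate p(a,b,c) along the trajectory, continued constantly to s < 0 so that it has an
  antiderivative on the whole line.\<close>
definition "p_rate s = bach_p (a (max s 0)) (b (max s 0)) (c (max s 0))"

lemma p_rate_eq: "s \<ge> 0 \<Longrightarrow> p_rate s = bach_p (a s) (b s) (c s)"
  unfolding p_rate_def by (simp add: max_def)

lemma continuous_p_rate: "continuous_on UNIV p_rate"
proof -
  have "continuous_on {0..} a" "continuous_on {0..} b" "continuous_on {0..} c"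
    using a_deriv b_deriv c_deriv by (auto intro!: DERIV_continuous_on)
  then show ?thesis
    unfolding p_rate_def bach_p_def by (intro continuous_intros continuous_on_max_0)
qed

lemma p_rate_tendsto: "(p_rate \<longlongrightarrow> 9 * (L/4)^4) at_top"
proof -
  have "((\<lambda>s. bach_p (a s) (b s) (c s)) \<longlongrightarrow> bach_p (L/4) L L) at_top"
    unfolding bach_p_def by (intro tendsto_intros a_tendsto b_tendsto_L c_tendsto_L)
  moreover have "\<forall>\<^sub>F s in at_top. bach_p (a s) (b s) (c s) = p_rate s"
    using eventually_ge_at_top[of 0] by eventually_elim (simp add: p_rate_eq)
  ultimately show ?thesis
    using bach_p_diagonal[of "L/4"] by (simp add: tendsto_cong)
qed

text \<open>U is g00^(1/3) as a function of the time s of (P).\<close>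
definition "U (s::real) = h0 powr (1/3) * exp (- (LBINT r=0..s. p_rate r) / 3)"

lemma U_pos: "U s > 0"
  unfolding U_def using h_pos by simp

lemma U_0: "U 0 = h0 powr (1/3)"
  unfolding U_def by (simp add: zero_ereal_def)

lemma U_deriv: "(U has_real_derivative - (p_rate s / 3) * U s) (at s)"
  unfolding U_def[abs_def]
  by (auto intro!: derivative_eq_intros DERIV_interval_integral continuous_p_rate)

lemma U_tendsto_0: "(U \<longlongrightarrow> 0) at_top"
proof -
  define \<psi> where "\<psi> (s::real) = (LBINT r=0..s. p_rate r)" for s
  have pos: "0 < 9 * (L/4)^4 / 2" using L_pos by simp
  have ev: "\<forall>\<^sub>F s in at_top. 9 * (L/4)^4 / 2 \<le> p_rate s"
    using order_tendstoD(1)[OF p_rate_tendsto, of "9 * (L/4)^4 / 2"] L_pos by (auto elim: eventually_mono)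
  have "(\<psi> has_real_derivative p_rate s) (at s)" for s
    unfolding \<psi>_def[abs_def] by (rule DERIV_interval_integral[OF continuous_p_rate])
  then have \<psi>_at_top: "filterlim \<psi> at_top at_top"
    by (rule DERIV_eventually_ge_imp_filterlim_at_top[OF _ ev pos])
  have "filterlim (\<lambda>s. 1/3 * \<psi> s) at_top at_top"
    using filterlim_tendsto_pos_mult_at_top[OF tendsto_const _ \<psi>_at_top, of "1/3"] by simp
  then have "filterlim (\<lambda>s. - \<psi> s / 3) at_bot at_top"
    by (simp add: filterlim_uminus_at_top)
  then have "((\<lambda>s. exp (- \<psi> s / 3)) \<longlongrightarrow> 0) at_top"
    by (rule filterlim_compose[OF exp_at_bot])
  then show ?thesis
    unfolding U_def[abs_def] \<psi>_def[symmetric] by (rule tendsto_mult_right_zero)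
qed

text \<open>The time t of (S3) as a function of the time s of (P): dt/ds = 1/(\<beta> U^2).\<close>
definition "clock (s::real) = (LBINT r=0..s. 1 / (\<beta> * U r ^ 2))"

lemma clock_deriv: "(clock has_real_derivative 1 / (\<beta> * U s ^ 2)) (at s)"
proof -
  have "continuous_on UNIV U"
    using U_deriv by (intro DERIV_continuous_on) auto
  then have "continuous_on UNIV (\<lambda>r. 1 / (\<beta> * U r ^ 2))"
    using \<beta>_pos U_pos by (intro continuous_intros) (auto simp: less_imp_neq[symmetric])
  then show ?thesis unfolding clock_def[abs_def] by (rule DERIV_interval_integral)
qed

lemma \<beta>_U_sq_pos: "\<beta> * U s ^ 2 > 0"
  using \<beta>_pos U_pos[of s] by simp

lemma clock_rate_pos: "1 / (\<beta> * U s ^ 2) > 0"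
  using \<beta>_U_sq_pos by simp

lemma clock_0: "clock 0 = 0"
  unfolding clock_def by (simp add: zero_ereal_def)

lemma clock_at_top: "filterlim clock at_top at_top"
proof (rule DERIV_eventually_ge_imp_filterlim_at_top[OF clock_deriv _ zero_less_one])
  have "((\<lambda>s. \<beta> * U s ^ 2) \<longlongrightarrow> 0) at_top"
    using tendsto_mult[OF tendsto_const[of \<beta>] tendsto_power[OF U_tendsto_0, of 2]] by simp
  then have "\<forall>\<^sub>F s in at_top. \<beta> * U s ^ 2 < 1"
    by (rule order_tendstoD) simp
  then show "\<forall>\<^sub>F s in at_top. 1 \<le> 1 / (\<beta> * U s ^ 2)"
    by eventually_elim (simp add: le_divide_eq_1 \<beta>_U_sq_pos)
qed

definition "S = inv clock"

lemmas S_nonneg = inv_clock_nonneg[OF clock_deriv clock_rate_pos clock_0 clock_at_top, folded S_def]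
   and S_0 = inv_clock_0[OF clock_deriv clock_rate_pos clock_0 clock_at_top, folded S_def]
   and S_at_top = inv_clock_at_top[OF clock_deriv clock_rate_pos clock_0 clock_at_top, folded S_def]

lemma S_deriv: "t \<ge> 0 \<Longrightarrow> (S has_real_derivative \<beta> * U (S t) ^ 2) (at t)"
  using inv_clock_deriv[OF clock_deriv clock_rate_pos clock_0 clock_at_top, folded S_def, of t] by simp

lemma comp_S_deriv:
  assumes f: "\<And>s. s \<ge> 0 \<Longrightarrow> (f has_real_derivative f' s) (at s within {0..})" and t: "t \<ge> 0"
  shows "((\<lambda>t. f (S t)) has_real_derivative f' (S t) * (\<beta> * U (S t) ^ 2)) (at t within {0..})"
proof -
  have "(f has_real_derivative f' (S t)) (at (S t) within S ` {0..})"
    using f[OF S_nonneg[OF t]] by (rule has_field_derivative_subset) (auto intro: S_nonneg)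
  from DERIV_image_chain[OF this has_field_derivative_at_within[OF S_deriv[OF t]]]
  show ?thesis by (simp add: o_def)
qed

lemma U_S_deriv:
  "t \<ge> 0 \<Longrightarrow> ((\<lambda>t. U (S t)) has_real_derivative (- (p_rate (S t) / 3) * U (S t)) * (\<beta> * U (S t) ^ 2))
     (at t within {0..})"
  by (rule comp_S_deriv) (rule has_field_derivative_at_within[OF U_deriv])

definition "G0 t = U (S t) ^ 3"
definition "G1 t = a (S t) / U (S t)"
definition "G2 t = b (S t) / U (S t)"
definition "G3 t = c (S t) / U (S t)"

lemma scaled_coordinate_deriv:
  assumes x: "\<And>s. s \<ge> 0 \<Longrightarrow> (x has_real_derivative \<rho> s * x s) (at s within {0..})"
    and rate: "\<And>s. s \<ge> 0 \<Longrightarrow> \<rho> s + p_rate s / 3 = - bach_q (x s) (y s) (z s)"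
    and t: "t \<ge> 0"
  shows "((\<lambda>t. x (S t) / U (S t)) has_real_derivative
      - \<beta> * bach_q (x (S t) / U (S t)) (y (S t) / U (S t)) (z (S t) / U (S t)) * G0 t ^ 2 * (x (S t) / U (S t)))
      (at t within {0..})"
proof -
  define s u where "s = S t" and "u = U (S t)"
  have u: "u > 0" unfolding u_def by (rule U_pos)
  have "((\<lambda>t. x (S t) / U (S t)) has_real_derivative
      (\<rho> s * x s * (\<beta> * u ^ 2) * u - x s * (- (p_rate s / 3) * u * (\<beta> * u ^ 2))) / (u * u))
      (at t within {0..})"
    using DERIV_divide[OF comp_S_deriv[OF x t] U_S_deriv[OF t]] u unfolding s_def u_def by simp
  moreover have "\<rho> s * x s * (\<beta> * u ^ 2) * u - x s * (- (p_rate s / 3) * u * (\<beta> * u ^ 2))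
      = (\<rho> s + p_rate s / 3) * \<beta> * x s * u ^ 3"
    by (simp add: algebra_simps power2_eq_square power3_eq_cube)
  moreover have "(\<rho> s + p_rate s / 3) * \<beta> * x s * u ^ 3 / (u * u)
      = - \<beta> * bach_q (x s / u) (y s / u) (z s / u) * (u ^ 3) ^ 2 * (x s / u)"
  proof -
    have "bach_q (x s) (y s) (z s) = u^4 * bach_q (x s / u) (y s / u) (z s / u)"
      by (rule bach_q_homogeneous) (use u in simp)
    then show ?thesis
      unfolding rate[OF S_nonneg[OF t, folded s_def]] using u
      by (simp add: field_simps power2_eq_square power3_eq_cube power4_eq_xxxx)
  qed
  ultimately show ?thesis unfolding G0_def s_def u_def by simp
qed

lemma G0_deriv:
  assumes t: "t \<ge> 0"
  shows "(G0 has_real_derivative - \<beta> * bach_p (G1 t) (G2 t) (G3 t) * G0 t ^ 3) (at t within {0..})"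
proof -
  define s u where "s = S t" and "u = U (S t)"
  have u: "u > 0" unfolding u_def by (rule U_pos)
  have "p_rate s = bach_p (a s) (b s) (c s)"
    unfolding s_def by (rule p_rate_eq[OF S_nonneg[OF t]])
  also have "\<dots> = u^4 * bach_p (a s / u) (b s / u) (c s / u)"
    by (rule bach_p_homogeneous) (use u in simp)
  finally have p: "p_rate s = u^4 * bach_p (G1 t) (G2 t) (G3 t)"
    unfolding G1_def G2_def G3_def s_def u_def .
  have deriv: "(G0 has_real_derivative of_nat 3 * ((- (p_rate s / 3) * u) * (\<beta> * u ^ 2) * u ^ (3 - Suc 0)))
      (at t within {0..})"
    using DERIV_power[OF U_S_deriv[OF t], of 3] unfolding G0_def[abs_def] s_def u_def .
  have eq: "of_nat 3 * ((- (p_rate s / 3) * u) * (\<beta> * u ^ 2) * u ^ (3 - Suc 0))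
      = - \<beta> * bach_p (G1 t) (G2 t) (G3 t) * G0 t ^ 3"
    unfolding p G0_def u_def[symmetric] by (simp add: power2_eq_square power3_eq_cube power4_eq_xxxx)
  show ?thesis using deriv unfolding eq .
qed

lemma G1_deriv: "t \<ge> 0 \<Longrightarrow>
    (G1 has_real_derivative - \<beta> * bach_q (G1 t) (G2 t) (G3 t) * G0 t ^ 2 * G1 t) (at t within {0..})"
  unfolding G1_def G2_def G3_def
  by (rule scaled_coordinate_deriv[OF a_deriv]) (simp_all only: p_rate_eq bach_rate_a)

lemma G2_deriv: "t \<ge> 0 \<Longrightarrow>
    (G2 has_real_derivative - \<beta> * bach_q (G2 t) (G3 t) (G1 t) * G0 t ^ 2 * G2 t) (at t within {0..})"
  unfolding G1_def G2_def G3_def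
  by (rule scaled_coordinate_deriv[OF b_deriv]) (simp_all only: p_rate_eq bach_rate_b)

lemma G3_deriv: "t \<ge> 0 \<Longrightarrow>
    (G3 has_real_derivative - \<beta> * bach_q (G3 t) (G1 t) (G2 t) * G0 t ^ 2 * G3 t) (at t within {0..})"
  unfolding G1_def G2_def G3_def
  by (rule scaled_coordinate_deriv[OF c_deriv]) (simp_all only: p_rate_eq bach_rate_c)

lemma G_initial: "G0 0 = h0" "G1 0 = h1" "G2 0 = h2" "G3 0 = h3"
proof -
  define r where "r = h0 powr (1/3)"
  have r: "r > 0" "r^3 = h0" unfolding r_def using h_pos by (simp_all add: cube_powr_third)
  have U0: "U 0 = r" unfolding r_def by (rule U_0)
  have b0: "b 0 = r * h2" and c0: "c 0 = r * h3"
    using P_sol unfolding P_solution_def r_def by auto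
  show "G0 0 = h0" unfolding G0_def S_0 U0 by (rule r(2))
  show "G2 0 = h2" unfolding G2_def S_0 U0 b0 using r by simp
  show "G3 0 = h3" unfolding G3_def S_0 U0 c0 using r by simp
  have "G1 0 = h0 * h1 / r^3"
    unfolding G1_def S_0 U0 a_def b0 c0 det_h_def using r(1) h_pos
    by (simp add: field_simps power3_eq_cube)
  then show "G1 0 = h1" using r h_pos by simp
qed

lemma G_S3_solution: "S3_solution h0 h1 h2 h3 G0 G1 G2 G3"
  unfolding S3_solution_def Let_def det_h_def[symmetric] \<beta>_def[symmetric]
  using G_initial G0_deriv G1_deriv G2_deriv G3_deriv by simp

lemma G_asymptotics:
  "(G0 \<longlongrightarrow> 0) at_top" "filterlim G1 at_top at_top" "filterlim G2 at_top at_top"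
  "filterlim G3 at_top at_top" "((\<lambda>t. G2 t / G1 t) \<longlongrightarrow> 4) at_top" "((\<lambda>t. G2 t / G3 t) \<longlongrightarrow> 1) at_top"
proof -
  have aS: "((\<lambda>t. a (S t)) \<longlongrightarrow> L/4) at_top" by (rule filterlim_compose[OF a_tendsto S_at_top])
  have bS: "((\<lambda>t. b (S t)) \<longlongrightarrow> L) at_top" by (rule filterlim_compose[OF b_tendsto_L S_at_top])
  have cS: "((\<lambda>t. c (S t)) \<longlongrightarrow> L) at_top" by (rule filterlim_compose[OF c_tendsto_L S_at_top])
  have US: "((\<lambda>t. U (S t)) \<longlongrightarrow> 0) at_top" by (rule filterlim_compose[OF U_tendsto_0 S_at_top])
  have US_pos: "\<forall>\<^sub>F t in at_top. 0 < U (S t)" by (simp add: U_pos)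
  show "(G0 \<longlongrightarrow> 0) at_top"
    unfolding G0_def[abs_def] using tendsto_power[OF US, of 3] by simp
  show "filterlim G1 at_top at_top" unfolding G1_def[abs_def]
    by (rule LIM_at_top_divide[OF aS _ US US_pos]) (use L_pos in simp)
  show "filterlim G2 at_top at_top" unfolding G2_def[abs_def]
    by (rule LIM_at_top_divide[OF bS _ US US_pos]) (use L_pos in simp)
  show "filterlim G3 at_top at_top" unfolding G3_def[abs_def]
    by (rule LIM_at_top_divide[OF cS _ US US_pos]) (use L_pos in simp)
  have "((\<lambda>t. b (S t) / a (S t)) \<longlongrightarrow> L / (L/4)) at_top"
    by (rule tendsto_divide[OF bS aS]) (use L_pos in simp)
  then show "((\<lambda>t. G2 t / G1 t) \<longlongrightarrow> 4) at_top"
    unfolding G1_def G2_def using L_pos U_pos by (simp add: less_imp_neq[symmetric])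
  have "((\<lambda>t. b (S t) / c (S t)) \<longlongrightarrow> L / L) at_top"
    by (rule tendsto_divide[OF bS cS]) (use L_pos in simp)
  then show "((\<lambda>t. G2 t / G3 t) \<longlongrightarrow> 1) at_top"
    unfolding G3_def G2_def using L_pos U_pos by (simp add: less_imp_neq[symmetric])
qed

lemma S3_solution_asymptotics:
  assumes g: "S3_solution h0 h1 h2 h3 g0 g1 g2 g3"
  shows "(g0 \<longlongrightarrow> 0) at_top \<and>
    filterlim g1 at_top at_top \<and> filterlim g2 at_top at_top \<and> filterlim g3 at_top at_top \<and>
    ((\<lambda>t. g2 t / g1 t) \<longlongrightarrow> 4) at_top \<and> ((\<lambda>t. g2 t / g3 t) \<longlongrightarrow> 1) at_top"
proof -
  have "\<forall>\<^sub>F t in at_top. G0 t = g0 t \<and> G1 t = g1 t \<and> G2 t = g2 t \<and> G3 t = g3 t"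
    using eventually_ge_at_top[of 0] by eventually_elim (use S3_solution_unique[OF G_S3_solution g] in blast)
  then have "\<forall>\<^sub>F t in at_top. G0 t = g0 t" "\<forall>\<^sub>F t in at_top. G1 t = g1 t"
    "\<forall>\<^sub>F t in at_top. G2 t = g2 t" "\<forall>\<^sub>F t in at_top. G3 t = g3 t"
    "\<forall>\<^sub>F t in at_top. G2 t / G1 t = g2 t / g1 t" "\<forall>\<^sub>F t in at_top. G2 t / G3 t = g2 t / g3 t"
    by (auto elim: eventually_mono)
  with G_asymptotics show ?thesis
    by (simp add: tendsto_cong[of "\<lambda>t. G0 t"] tendsto_cong[of "\<lambda>t. G2 t / G1 t"]
        tendsto_cong[of "\<lambda>t. G2 t / G3 t"] filterlim_cong)
qed

end

theorem theorem5p20: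
  fixes h0 h1 h2 h3 :: real
  assumes "h0 > 0" "h1 > 0" "h2 > 0" "h3 > 0"
    and "h1 \<le> h2" "h2 \<le> h3"
    and "in_D_S h0 h1 h2 h3"
  shows "(\<exists>g0 g1 g2 g3. S3_solution h0 h1 h2 h3 g0 g1 g2 g3) \<and>
         (\<forall>g0 g1 g2 g3. S3_solution h0 h1 h2 h3 g0 g1 g2 g3 \<longrightarrow>
            (g0 \<longlongrightarrow> 0) at_top \<and>
            filterlim g1 at_top at_top \<and> filterlim g2 at_top at_top \<and> filterlim g3 at_top at_top \<and>
            ((\<lambda>t. g2 t / g1 t) \<longlongrightarrow> 4) at_top \<and>
            ((\<lambda>t. g2 t / g3 t) \<longlongrightarrow> 1) at_top)"
proof -
  obtain b c where "P_solution (h0*h1*h2*h3) (h0 powr (1/3) * h2) (h0 powr (1/3) * h3) b c"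
    "(b \<longlongrightarrow> (4*(h0*h1*h2*h3)) powr (1/3)) at_top" "(c \<longlongrightarrow> (4*(h0*h1*h2*h3)) powr (1/3)) at_top"
    using assms(7) unfolding in_D_S_def Let_def by blast
  then interpret D_S_trajectory h0 h1 h2 h3 b c
    using assms(1-4) by unfold_locales
  show ?thesis using G_S3_solution S3_solution_asymptotics by blast
qed

end
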